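(* Let $G$ be a connected graph with $|V(G)|\ge 3$ and $L(G)=2l(G)$, and let $F_L,F_l$ be maximum matchings of $G$ with $\nu(G\setminus F_L)=L(G)$ and $\nu(G\setminus F_l)=l(G)$. Then for any maximum matching $H_L$ of $G\setminus F_L$, no edge of $F_L\cap F_l$ is adjacent to two edges of $H_L$.
   Context: Graphs are finite, undirected, without loops or multiple edges. $\nu(G)$ denotes the maximum size of a matching of $G$; a matching is maximum if it has $\nu(G)$ edges. For $F\subseteq E(G)$, $G\setminus F$ is the graph with vertex set $V(G)$ and edge set $E(G)\setminus F$. Two distinct edges are adjacent if they share an endpoint. Define $L(G)=\max\{\nu(G\setminus F): F \text{ a maximum matching of } G\}$ and $l(G)=\min\{\nu(G\setminus F): F \text{ a maximum matching of } G\}$. *)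

theory Defs
  imports Main
begin

definition simple_graph :: "'a set \<Rightarrow> 'a set set \<Rightarrow> bool" where
  "simple_graph V E \<longleftrightarrow> finite V \<and>
     (\<forall>e\<in>E. \<exists>u v. e = {u, v} \<and> u \<noteq> v \<and> u \<in> V \<and> v \<in> V)"

definition connected_graph :: "'a set \<Rightarrow> 'a set set \<Rightarrow> bool" where
  "connected_graph V E \<longleftrightarrow>
     (\<forall>u\<in>V. \<forall>v\<in>V. (u, v) \<in> {(x, y). {x, y} \<in> E}\<^sup>*)"

definition matching_of :: "'a set set \<Rightarrow> 'a set set \<Rightarrow> bool" where
  "matching_of E M \<longleftrightarrow> M \<subseteq> E \<and> (\<forall>e\<in>M. \<forall>f\<in>M. e \<noteq> f \<longrightarrow> e \<inter> f = {})"

definition nu :: "'a set set \<Rightarrow> nat" where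
  "nu E = Max {card M | M. matching_of E M}"

definition max_matching :: "'a set set \<Rightarrow> 'a set set \<Rightarrow> bool" where
  "max_matching E M \<longleftrightarrow> matching_of E M \<and> card M = nu E"

definition L_nu :: "'a set set \<Rightarrow> nat" where
  "L_nu E = Max {nu (E - F) | F. max_matching E F}"

definition l_nu :: "'a set set \<Rightarrow> nat" where
  "l_nu E = Min {nu (E - F) | F. max_matching E F}"

definition adjacent_edges :: "'a set \<Rightarrow> 'a set \<Rightarrow> bool" where
  "adjacent_edges e f \<longleftrightarrow> e \<noteq> f \<and> e \<inter> f \<noteq> {}"

end

theory Submission
  imports Defs
begin

(* Write k = l(G), so that |H_L| = L(G) = 2k.  A counting argument shows
   that the doubling L = 2l is extremely rigid: since H_L - F_l and F_L - F_l are
   matchings of G - F_l (so have at most k edges) and H_L \<inter> F_l \<subseteq> F_l - F_L, where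
   |F_l - F_L| = |F_L - F_l|, all these inequalities are tight.  Hence
   F_L - F_l is a maximum matching of G - F_l and F_l - F_L \<subseteq> H_L.
   Now let e \<in> F_L \<inter> F_l and let h \<in> H_L be adjacent to e, h = {x, w} with x \<in> e.
   The edge h lies outside the maximum matching F_L - F_l of G - F_l, so it meets it,
   necessarily in w; this forces h to be disjoint from every edge of F_l other than e.
   If two edges h1, h2 of H_L were adjacent to e, then (F_l - {e}) \<union> {h1, h2} would be
   a matching of G larger than the maximum matching F_l, a contradiction. *)

lemma simple_graph_finite_edges:
  assumes "simple_graph V E"
  shows "finite E"
proof -
  have "E \<subseteq> Pow V"
  proof
    fix x assume "x \<in> E"
    then obtain u v where "x = {u, v}" "u \<in> V" "v \<in> V"
      using assms unfolding simple_graph_def by blast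
    thus "x \<in> Pow V" by simp
  qed
  moreover have "finite V"
    using assms unfolding simple_graph_def by simp
  ultimately show ?thesis
    by (simp add: finite_subset)
qed

lemma card_matching_le_nu:
  assumes "finite E" "matching_of E M"
  shows "card M \<le> nu E"
proof -
  have "{card M |M. matching_of E M} \<subseteq> card ` Pow E"
    unfolding matching_of_def by blast
  hence "finite {card M |M. matching_of E M}"
    by (rule finite_subset) (simp add: assms(1))
  thus ?thesis
    unfolding nu_def using assms(2) by (intro Max_ge) auto
qed

lemma matching_of_Diff:
  assumes "matching_of E M"
  shows "matching_of (E - F) (M - F)"
  using assms unfolding matching_of_def by blast

lemma finite_matching:
  assumes "finite E" "matching_of E M"
  shows "finite M"
  using assms unfolding matching_of_def by (meson finite_subset)

lemma max_matching_meets: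
  assumes "finite E" "max_matching E M" "h \<in> E" "h \<notin> M"
  shows "\<exists>f\<in>M. f \<inter> h \<noteq> {}"
proof (rule ccontr)
  assume "\<not> (\<exists>f\<in>M. f \<inter> h \<noteq> {})"
  hence "matching_of E (insert h M)"
    using assms(2,3) unfolding max_matching_def matching_of_def by blast
  hence "card (insert h M) \<le> nu E"
    by (rule card_matching_le_nu[OF assms(1)])
  moreover have "finite M"
    using assms(1,2) finite_matching unfolding max_matching_def by blast
  ultimately show False
    using assms(2,4) unfolding max_matching_def by simp
qed

lemma max_matching_no_exchange:
  assumes "finite E" "max_matching E M" "e \<in> M"
    and "h1 \<in> E" "h2 \<in> E" "h1 \<notin> M" "h2 \<notin> M" "h1 \<noteq> h2" "h1 \<inter> h2 = {}"
    and "\<forall>g\<in>M - {e}. g \<inter> h1 = {} \<and> g \<inter> h2 = {}"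
  shows False
proof -
  let ?M' = "insert h1 (insert h2 (M - {e}))"
  have "matching_of E ?M'"
    using assms(2,4,5,9,10) unfolding max_matching_def matching_of_def by blast
  hence "card ?M' \<le> nu E"
    by (rule card_matching_le_nu[OF assms(1)])
  moreover have "card ?M' = card M + 1"
  proof -
    have "finite M"
      using assms(1,2) finite_matching unfolding max_matching_def by blast
    hence "Suc (card (M - {e})) = card M"
      using assms(3) by (rule card_Suc_Diff1)
    thus ?thesis
      using \<open>finite M\<close> assms(6,7,8) by simp
  qed
  ultimately show False
    using assms(2) unfolding max_matching_def by simp
qed

lemma adjacent_edge_shape:
  assumes "simple_graph V E" "h \<in> E" "e \<in> E" "adjacent_edges e h"
  shows "\<exists>w. w \<in> h \<and> w \<notin> e \<and> h \<subseteq> insert w e"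
proof -
  obtain a b where h: "h = {a, b}" "a \<noteq> b"
    using assms(1,2) unfolding simple_graph_def by blast
  obtain u v where e: "e = {u, v}" "u \<noteq> v"
    using assms(1,3) unfolding simple_graph_def by blast
  have "h \<noteq> e" "h \<inter> e \<noteq> {}"
    using assms(4) unfolding adjacent_edges_def by auto
  with h e show ?thesis
    by auto
qed

lemma doubling_rigidity:
  assumes finE: "finite E"
    and FL: "max_matching E FL" and Fl: "max_matching E Fl"
    and HL: "max_matching (E - FL) HL"
    and double: "2 * nu (E - Fl) \<le> nu (E - FL)"
  shows "max_matching (E - Fl) (FL - Fl)" "Fl - FL \<subseteq> HL"
proof -
  define k where "k = nu (E - Fl)"
  have mFL: "matching_of E FL" and mFl: "matching_of E Fl" and mHL: "matching_of (E - FL) HL"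
    using FL Fl HL unfolding max_matching_def by auto
  have finFL: "finite FL" and finFl: "finite Fl" and finHL: "finite HL"
    using finE mFL mFl mHL finite_matching by (blast, blast, blast)
  have HL_in: "HL \<inter> Fl \<subseteq> Fl - FL"
    using mHL unfolding matching_of_def by auto
  have le1: "card (HL - Fl) \<le> k"
    using finE mHL by (auto intro!: card_matching_le_nu matching_of_Diff
        simp: k_def matching_of_def)
  have le2: "card (FL - Fl) \<le> k"
    unfolding k_def using finE mFL by (auto intro: card_matching_le_nu matching_of_Diff)
  have le3: "card (HL \<inter> Fl) \<le> card (Fl - FL)"
    using finFl HL_in by (simp add: card_mono)
  have card_swap: "card (Fl - FL) = card (FL - Fl)"
    using FL Fl finFL finFl
    by (simp add: card_Diff_subset_Int Int_commute max_matching_def)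
  have card_split: "card HL = card (HL - Fl) + card (HL \<inter> Fl)"
    using finHL card_Int_Diff[of HL Fl] by (simp add: add.commute)
  have "2 * k \<le> card HL"
    using HL double unfolding k_def max_matching_def by simp
  hence tight1: "card (FL - Fl) = k" and tight2: "card (HL \<inter> Fl) = card (Fl - FL)"
    using le1 le2 le3 card_swap card_split by linarith+
  show "max_matching (E - Fl) (FL - Fl)"
    unfolding max_matching_def k_def[symmetric] using tight1 mFL matching_of_Diff by blast
  have "HL \<inter> Fl = Fl - FL"
    using finFl HL_in tight2 by (intro card_subset_eq) auto
  thus "Fl - FL \<subseteq> HL"
    by blast
qed

lemma adjacent_edge_avoids_Fl:
  assumes G: "simple_graph V E"
    and mFL: "matching_of E FL" and mFl: "matching_of E Fl" and mHL: "matching_of (E - FL) HL"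
    and FL_Fl: "max_matching (E - Fl) (FL - Fl)" and Fl_HL: "Fl - FL \<subseteq> HL"
    and e: "e \<in> FL \<inter> Fl" and h: "h \<in> HL" "adjacent_edges e h"
  shows "h \<notin> Fl" "\<forall>g\<in>Fl - {e}. g \<inter> h = {}"
proof -
  have hE: "h \<in> E" and h_FL: "h \<notin> FL"
    using mHL h(1) unfolding matching_of_def by auto
  have eE: "e \<in> E"
    using e mFL unfolding matching_of_def by blast
  obtain w where w: "w \<in> h" "w \<notin> e" "h \<subseteq> insert w e"
    using adjacent_edge_shape[OF G hE eE h(2)] by blast
  show h_Fl: "h \<notin> Fl"
  proof
    assume "h \<in> Fl"
    moreover have "h \<noteq> e" "h \<inter> e \<noteq> {}"
      using h(2) unfolding adjacent_edges_def by auto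
    ultimately show False
      using mFl e unfolding matching_of_def by blast
  qed
  text \<open>The edge \<open>h\<close> meets the maximum matching \<open>FL - Fl\<close> of \<open>E - Fl\<close>, and only at \<open>w\<close>,
    since the edges of \<open>FL - Fl\<close> are disjoint from \<open>e \<in> FL\<close>.\<close>
  have "finite (E - Fl)"
    using simple_graph_finite_edges[OF G] by simp
  moreover have "h \<in> E - Fl" "h \<notin> FL - Fl"
    using hE h_Fl h_FL by auto
  ultimately obtain f where f: "f \<in> FL - Fl" "f \<inter> h \<noteq> {}"
    using max_matching_meets[OF _ FL_Fl] by blast
  have "f \<noteq> e"
    using f(1) e by blast
  hence "f \<inter> e = {}"
    using mFL f(1) e unfolding matching_of_def by blast
  hence w_in_f: "w \<in> f"
    using f(2) w(3) by blast
  show "\<forall>g\<in>Fl - {e}. g \<inter> h = {}"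
  proof
    fix g assume g: "g \<in> Fl - {e}"
    have "w \<notin> g"
    proof
      assume wg: "w \<in> g"
      show False
      proof (cases "g \<in> FL")
        case True
        hence "g = f"
          using mFL f(1) w_in_f wg unfolding matching_of_def by blast
        thus False using g f(1) by blast
      next
        case False
        hence "g \<in> HL"
          using g Fl_HL by blast
        hence "g = h"
          using mHL h(1) wg w(1) unfolding matching_of_def by blast
        thus False using g h_Fl by blast
      qed
    qed
    moreover have "g \<noteq> e" "g \<in> Fl"
      using g by auto
    hence "g \<inter> e = {}"
      using mFl e unfolding matching_of_def by blast
    ultimately show "g \<inter> h = {}"
      using w(3) by blast
  qed
qed

theorem claim4:
  fixes V :: "'a set" and E FL Fl HL :: "'a set set"
  assumes "simple_graph V E"
    and "connected_graph V E"
    and "card V \<ge> 3"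
    and "L_nu E = 2 * l_nu E"
    and "max_matching E FL" and "nu (E - FL) = L_nu E"
    and "max_matching E Fl" and "nu (E - Fl) = l_nu E"
    and "max_matching (E - FL) HL"
  shows "\<forall>e\<in>FL \<inter> Fl. \<not> (\<exists>h1\<in>HL. \<exists>h2\<in>HL. h1 \<noteq> h2 \<and>
           adjacent_edges e h1 \<and> adjacent_edges e h2)"
proof (intro ballI notI)
  fix e assume e: "e \<in> FL \<inter> Fl"
  assume "\<exists>h1\<in>HL. \<exists>h2\<in>HL. h1 \<noteq> h2 \<and> adjacent_edges e h1 \<and> adjacent_edges e h2"
  then obtain h1 h2 where h: "h1 \<in> HL" "h2 \<in> HL" "h1 \<noteq> h2"
      "adjacent_edges e h1" "adjacent_edges e h2"
    by blast
  have finE: "finite E"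
    using assms(1) by (rule simple_graph_finite_edges)
  have mFL: "matching_of E FL" and mFl: "matching_of E Fl" and mHL: "matching_of (E - FL) HL"
    using assms(5,7,9) unfolding max_matching_def by auto
  have "max_matching (E - Fl) (FL - Fl)" "Fl - FL \<subseteq> HL"
    using doubling_rigidity[OF finE assms(5,7,9)] assms(4,6,8) by simp_all
  note avoid = adjacent_edge_avoids_Fl[OF assms(1) mFL mFl mHL this e]
  have h1_avoids: "h1 \<notin> Fl" "\<forall>g\<in>Fl - {e}. g \<inter> h1 = {}"
    using avoid[OF h(1,4)] by blast+
  have h2_avoids: "h2 \<notin> Fl" "\<forall>g\<in>Fl - {e}. g \<inter> h2 = {}"
    using avoid[OF h(2,5)] by blast+
  have "h1 \<in> E" "h2 \<in> E" "h1 \<inter> h2 = {}"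
    using mHL h(1-3) unfolding matching_of_def by auto
  moreover have "e \<in> Fl"
    using e by blast
  ultimately show False
    using max_matching_no_exchange[OF finE assms(7)] h1_avoids h2_avoids h(3) by blast
qed

end
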